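(* Let $\mathcal{D}$ be any basic action theory whose initial theory $\mathcal{D}_0$ includes the axiom $$(\star)\quad [\forall \vec x\, \exists \iota \textstyle\bigwedge_i f_i(\iota) = x_i] \land [\forall \iota,\iota'.\ \textstyle\bigwedge_i f_i(\iota) = f_i(\iota') \supset \iota = \iota'],$$ and let $\phi$ be any situation-suppressed $\mathcal{L}$-formula. Then $$\frac{1}{\gamma}\sum_{\{s':\phi[s']\}} p(s',S_0) \quad\text{and}\quad \frac{1}{\gamma'}\sum_{\vec x} \langle \iota.\ \textstyle\bigwedge_i f_i(\iota) = x_i \land \phi[\iota] \to p(\iota,S_0)\rangle$$ define the same number (in every $\mathbb{R}$-interpretation satisfying $\mathcal{D}$), where $\gamma,\gamma'$ are the respective numerators with $\phi$ replaced by $\mathit{true}$.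
   Context: Situation calculus: a many-sorted language $\mathcal{L}$ with sorts action, situation, object; $do(a,s)$ is the successor of $s$ under action $a$; $S_0$ is the actual initial situation; $\mathit{Init}(s) \doteq \neg\exists a,s'.\, s = do(a,s')$, and $\iota,\iota'$ range over initial situations. $f_1,\ldots,f_n$ are all the fluents, each taking only a situation argument and taking values in a finite set; $\vec x$ ranges over value vectors, $i$ over $1..n$. $\phi[s]$ restores situation argument $s$ in $\phi$. For a variable $z$, formula $\psi$ and term $t$, $\langle z.\ \psi \to t\rangle = u$ abbreviates $[(\exists z\psi)\supset \forall z(\psi \supset u = t)] \land [(\neg\exists z\psi) \supset u = 0]$. Distinguished symbols: $\mathit{Poss}(a,s)$, $p(s',s)$ (weight of $s'$ when in $s$), $l(a,s)$ (likelihood). A basic action theory consists of $\mathcal{D}_0$ containing (P1) $\forall \iota,s.\ p(s,\iota) \ge 0 \land (p(s,\iota) > 0 \supset \mathit{Init}(s))$; precondition axioms; successor state axioms including (P2) $p(s',do(a,s)) = u \equiv \exists s''[s' = do(a,s'') \land \mathit{Poss}(a,s'') \land u = p(s'',s)\times l(a,s'')] \lor \neg\exists s''[s'=do(a,s'')\land \mathit{Poss}(a,s'')] \land u = 0$; likelihood axioms $l(A(\vec x),s)=u\equiv\psi_A(\vec x,u,s)$; foundational axioms. Entailment is over $\mathbb{R}$-interpretations (arithmetic, $e,\pi$, exp, log with usual meaning over the reals). Finite sums are abbreviations for second-order formulas. *)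

theory Defs
  imports "HOL-Analysis.Analysis"
begin

text \<open>Semantic rendering of the situation calculus: an R-interpretation gives
  a domain of actions 'act, situations 'sit, objects 'obj, and interprets
  do, S0, the fluents f i (i ranging over a finite index type 'i), p, l, Poss.\<close>

definition Init :: "('act \<Rightarrow> 'sit \<Rightarrow> 'sit) \<Rightarrow> 'sit \<Rightarrow> bool" where
  "Init do s \<longleftrightarrow> \<not> (\<exists>a s'. s = do a s')"

definition foundational :: "('act \<Rightarrow> 'sit \<Rightarrow> 'sit) \<Rightarrow> bool" where
  "foundational do \<longleftrightarrow>
     (\<forall>a1 s1 a2 s2. do a1 s1 = do a2 s2 \<longrightarrow> a1 = a2 \<and> s1 = s2) \<and>
     (\<forall>P. (\<forall>s. Init do s \<longrightarrow> P s) \<and> (\<forall>a s. P s \<longrightarrow> P (do a s)) \<longrightarrow> (\<forall>s. P s))"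

definition axP1 :: "('act \<Rightarrow> 'sit \<Rightarrow> 'sit) \<Rightarrow> ('sit \<Rightarrow> 'sit \<Rightarrow> real) \<Rightarrow> bool" where
  "axP1 do p \<longleftrightarrow> (\<forall>\<iota> s. Init do \<iota> \<longrightarrow> p s \<iota> \<ge> 0 \<and> (p s \<iota> > 0 \<longrightarrow> Init do s))"

definition axP2 :: "('act \<Rightarrow> 'sit \<Rightarrow> 'sit) \<Rightarrow> ('act \<Rightarrow> 'sit \<Rightarrow> bool) \<Rightarrow>
    ('sit \<Rightarrow> 'sit \<Rightarrow> real) \<Rightarrow> ('act \<Rightarrow> 'sit \<Rightarrow> real) \<Rightarrow> bool" where
  "axP2 do Poss p l \<longleftrightarrow> (\<forall>s' a s u. p s' (do a s) = u \<longleftrightarrow>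
     (\<exists>s''. s' = do a s'' \<and> Poss a s'' \<and> u = p s'' s * l a s'') \<or>
     (\<not> (\<exists>s''. s' = do a s'' \<and> Poss a s'') \<and> u = 0))"

definition vectors :: "('i \<Rightarrow> 'obj set) \<Rightarrow> ('i \<Rightarrow> 'obj) set" where
  "vectors V = PiE UNIV V"

definition axStar :: "('act \<Rightarrow> 'sit \<Rightarrow> 'sit) \<Rightarrow> ('i \<Rightarrow> 'obj set) \<Rightarrow> ('i \<Rightarrow> 'sit \<Rightarrow> 'obj) \<Rightarrow> bool" where
  "axStar do V f \<longleftrightarrow>
     (\<forall>x \<in> vectors V. \<exists>\<iota>. Init do \<iota> \<and> (\<forall>i. f i \<iota> = x i)) \<and>
     (\<forall>\<iota> \<iota>'. Init do \<iota> \<and> Init do \<iota>' \<and> (\<forall>i. f i \<iota> = f i \<iota>') \<longrightarrow> \<iota> = \<iota>')"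

text \<open>The abbreviation  <z. psi -> t> = u  and the value it denotes.\<close>
definition cond_eq :: "('z \<Rightarrow> bool) \<Rightarrow> ('z \<Rightarrow> real) \<Rightarrow> real \<Rightarrow> bool" where
  "cond_eq \<psi> t u \<longleftrightarrow> ((\<exists>z. \<psi> z) \<longrightarrow> (\<forall>z. \<psi> z \<longrightarrow> u = t z)) \<and> ((\<not> (\<exists>z. \<psi> z)) \<longrightarrow> u = 0)"

definition cond_term :: "('z \<Rightarrow> bool) \<Rightarrow> ('z \<Rightarrow> real) \<Rightarrow> real" where
  "cond_term \<psi> t = (THE u. cond_eq \<psi> t u)"

end

theory Submission
  imports Defs
begin

text \<open>By (P1) the weight p(-, S0) vanishes off the initial situations, and by (\<open>\<star>\<close>) the map
  \<open>\<iota> \<mapsto> (f\<^sub>1(\<iota>), \<dots>, f\<^sub>n(\<iota>))\<close> is a bijection from the initial situations onto the finite set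
  of value vectors. Hence the (a priori infinite) sum over the situations satisfying \<open>\<phi>\<close> is a
  finite sum over initial situations, and reindexing it along the bijection turns the summand
  of \<open>\<iota>\<close> into the conditional term of its value vector, which picks out the unique initial
  situation in that fibre. Numerators and normalising constants agree, so do the quotients.\<close>

lemma cond_term_eq:
  assumes "\<psi> z" and "\<And>z'. \<psi> z' \<Longrightarrow> z' = z"
  shows "cond_term \<psi> t = t z"
  unfolding cond_term_def
proof (rule the_equality)
  show "cond_eq \<psi> t (t z)"
    using assms unfolding cond_eq_def by blast
  show "u = t z" if "cond_eq \<psi> t u" for u
    using that assms unfolding cond_eq_def by blast
qed

lemma cond_term_eq_0:
  assumes "\<And>z. \<not> \<psi> z"
  shows "cond_term \<psi> t = 0"
  unfolding cond_term_def
proof (rule the_equality)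
  show "cond_eq \<psi> t 0"
    using assms unfolding cond_eq_def by auto
  show "u = 0" if "cond_eq \<psi> t u" for u
    using that assms unfolding cond_eq_def by auto
qed

lemma sum_cond_term_fibres:
  assumes bij: "bij_betw g I X" and "finite I"
  shows "(\<Sum>x\<in>X. cond_term (\<lambda>z. z \<in> I \<and> g z = x \<and> Q z) t) = (\<Sum>z\<in>{z\<in>I. Q z}. t z)"
proof -
  have "(\<Sum>x\<in>X. cond_term (\<lambda>z. z \<in> I \<and> g z = x \<and> Q z) t)
      = (\<Sum>z\<in>I. cond_term (\<lambda>z'. z' \<in> I \<and> g z' = g z \<and> Q z') t)"
    by (rule sum.reindex_bij_betw[OF bij, symmetric])
  also have "\<dots> = (\<Sum>z\<in>I. if Q z then t z else 0)"
  proof (rule sum.cong[OF refl])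
    fix z assume "z \<in> I"
    then have fibre: "z' \<in> I \<and> g z' = g z \<longleftrightarrow> z' = z" for z'
      using bij_betw_imp_inj_on[OF bij] by (auto dest: inj_onD)
    show "cond_term (\<lambda>z'. z' \<in> I \<and> g z' = g z \<and> Q z') t = (if Q z then t z else 0)"
    proof (cases "Q z")
      case True
      then show ?thesis
        using \<open>z \<in> I\<close> fibre by (auto intro!: cond_term_eq)
    next
      case False
      have "cond_term (\<lambda>z'. z' \<in> I \<and> g z' = g z \<and> Q z') t = 0"
        by (rule cond_term_eq_0) (use False fibre in metis)
      with False show ?thesis by simp
    qed
  qed
  also have "\<dots> = (\<Sum>z\<in>{z\<in>I. Q z}. t z)"
    using \<open>finite I\<close> by (rule sum.inter_filter[symmetric])
  finally show ?thesis .
qed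

lemma finite_vectors:
  fixes V :: "'i::finite \<Rightarrow> 'obj set"
  assumes "\<And>i. finite (V i)"
  shows "finite (vectors V)"
  unfolding vectors_def using assms by (simp add: finite_PiE)

lemma axStar_bij_betw_vectors:
  assumes star: "axStar do V f" and range: "\<forall>i s. f i s \<in> V i"
  shows "bij_betw (\<lambda>\<iota> i. f i \<iota>) {\<iota>. Init do \<iota>} (vectors V)"
proof (rule bij_betw_imageI)
  show "inj_on (\<lambda>\<iota> i. f i \<iota>) {\<iota>. Init do \<iota>}"
    using star unfolding axStar_def by (auto intro!: inj_onI simp: fun_eq_iff)
  show "(\<lambda>\<iota> i. f i \<iota>) ` {\<iota>. Init do \<iota>} = vectors V"
  proof
    show "(\<lambda>\<iota> i. f i \<iota>) ` {\<iota>. Init do \<iota>} \<subseteq> vectors V"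
      using range unfolding vectors_def by auto
    show "vectors V \<subseteq> (\<lambda>\<iota> i. f i \<iota>) ` {\<iota>. Init do \<iota>}"
    proof
      fix x assume "x \<in> vectors V"
      then obtain \<iota> where "Init do \<iota>" and "\<forall>i. f i \<iota> = x i"
        using star unfolding axStar_def by blast
      then show "x \<in> (\<lambda>\<iota> i. f i \<iota>) ` {\<iota>. Init do \<iota>}"
        by (auto simp: image_iff fun_eq_iff)
    qed
  qed
qed

lemma axP1_weight_eq_0:
  assumes "axP1 do p" and "Init do \<iota>" and "\<not> Init do s"
  shows "p s \<iota> = 0"
  using assms unfolding axP1_def by force

lemma infsum_weight_eq_sum_cond_term:
  fixes f :: "'i::finite \<Rightarrow> 'sit \<Rightarrow> 'obj"
  assumes "Init do \<iota>\<^sub>0" and "\<forall>i. finite (V i)" and "\<forall>i s. f i s \<in> V i"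
    and "axP1 do p" and "axStar do V f"
  shows "infsum (\<lambda>s. p s \<iota>\<^sub>0) {s. Q s} =
    (\<Sum>x \<in> vectors V. cond_term (\<lambda>\<iota>. Init do \<iota> \<and> (\<forall>i. f i \<iota> = x i) \<and> Q \<iota>) (\<lambda>\<iota>. p \<iota> \<iota>\<^sub>0))"
proof -
  define I where "I = {\<iota>. Init do \<iota>}"
  have bij: "bij_betw (\<lambda>\<iota> i. f i \<iota>) I (vectors V)"
    unfolding I_def by (rule axStar_bij_betw_vectors[OF assms(5,3)])
  have "finite I"
    using bij_betw_finite[OF bij] finite_vectors assms(2) by blast
  have "infsum (\<lambda>s. p s \<iota>\<^sub>0) {s. Q s} = infsum (\<lambda>s. p s \<iota>\<^sub>0) {s\<in>I. Q s}"
    by (rule infsum_cong_neutral) (auto simp: I_def axP1_weight_eq_0[OF assms(4,1)])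
  also have "\<dots> = (\<Sum>s\<in>{s\<in>I. Q s}. p s \<iota>\<^sub>0)"
    using \<open>finite I\<close> by simp
  also have "\<dots> = (\<Sum>x \<in> vectors V. cond_term (\<lambda>\<iota>. \<iota> \<in> I \<and> (\<lambda>i. f i \<iota>) = x \<and> Q \<iota>) (\<lambda>\<iota>. p \<iota> \<iota>\<^sub>0))"
    by (rule sum_cond_term_fibres[OF bij \<open>finite I\<close>, symmetric])
  also have "\<dots> = (\<Sum>x \<in> vectors V. cond_term (\<lambda>\<iota>. Init do \<iota> \<and> (\<forall>i. f i \<iota> = x i) \<and> Q \<iota>) (\<lambda>\<iota>. p \<iota> \<iota>\<^sub>0))"
    by (simp add: I_def fun_eq_iff)
  finally show ?thesis .
qed

text \<open>Only (P1) and (\<open>\<star>\<close>) are needed: the foundational axioms and (P2) concern successor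
  situations, which carry no weight at S0.\<close>

theorem mainTheorem10:
  fixes do :: "'act \<Rightarrow> 'sit \<Rightarrow> 'sit" and S0 :: 'sit
    and f :: "'i::finite \<Rightarrow> 'sit \<Rightarrow> 'obj" and V :: "'i \<Rightarrow> 'obj set"
    and p :: "'sit \<Rightarrow> 'sit \<Rightarrow> real" and l :: "'act \<Rightarrow> 'sit \<Rightarrow> real"
    and Poss :: "'act \<Rightarrow> 'sit \<Rightarrow> bool" and \<phi> :: "'sit \<Rightarrow> bool"
  assumes "foundational do"
    and "Init do S0"
    and "\<forall>i. finite (V i)"
    and "\<forall>i s. f i s \<in> V i"
    and "axP1 do p"
    and "axP2 do Poss p l"
    and "axStar do V f"
  shows "infsum (\<lambda>s'. p s' S0) {s'. \<phi> s'} / infsum (\<lambda>s'. p s' S0) UNIV =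
    (\<Sum>x \<in> vectors V. cond_term (\<lambda>\<iota>. Init do \<iota> \<and> (\<forall>i. f i \<iota> = x i) \<and> \<phi> \<iota>) (\<lambda>\<iota>. p \<iota> S0))
    / (\<Sum>x \<in> vectors V. cond_term (\<lambda>\<iota>. Init do \<iota> \<and> (\<forall>i. f i \<iota> = x i)) (\<lambda>\<iota>. p \<iota> S0))"
  using infsum_weight_eq_sum_cond_term[OF assms(2,3,4,5,7), of \<phi>]
    infsum_weight_eq_sum_cond_term[OF assms(2,3,4,5,7), of "\<lambda>_. True"]
  by simp

end
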